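(* Let $n\ge2$ and let $h$ be a smooth symmetric two-covariant tensor field on $\mathbb H^n$. Define the symmetric tensor field \[ \psi=\frac{1}{(x^1)^{n+1}}\bigl(h-h^i{}_i\, b\bigr). \] Then $h=(x^1)^{n+1}\bigl(\psi+\tfrac{1}{1-n}\psi^i{}_i\, b\bigr)$ and \[ P(h)=(x^1)^{n+1}\Bigl(\partial_i\partial_j\psi^{ij}+\partial_1\bigl(\tfrac{1}{x^1}\psi^{ii}\bigr)\Bigr), \] where $\psi^{ij}=b^{ik}b^{j\ell}\psi_{k\ell}$ and $\partial_i=\partial_{x^i}$.
   Context: $\mathbb H^n=\{x\in\mathbb R^n:x^1>0\}$ with hyperbolic metric $b=(x^1)^{-2}\sum_i dx^i\otimes dx^i$. Components are taken in the coordinates $x$; indices are raised and lowered with $b$; all repeated indices are summed over $1,\dots,n$ regardless of position (so $\psi^{ii}=\sum_i\psi^{ii}$ and $h^i{}_i=b^{ij}h_{ij}$). $P(h)=D^iD^jh_{ij}-D^iD_ih^j{}_j-\mathrm{Ric}^{ij}h_{ij}$, where $D$ and $\mathrm{Ric}$ are the Levi-Civita connection and Ricci tensor of $b$. *)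

theory Defs
  imports "HOL-Analysis.Analysis"
begin

(* Points of R^n are vectors real^'n with 'n a finite index type, n = CARD('n).
   The distinguished coordinate x^1 is the component x $ c for a fixed index c. *)

type_synonym 'n sfield = "real^'n \<Rightarrow> real"
type_synonym 'n tensor2 = "'n \<Rightarrow> 'n \<Rightarrow> real^'n \<Rightarrow> real"

definition pd :: "'n::finite \<Rightarrow> 'n sfield \<Rightarrow> 'n sfield" where
  "pd i f x = deriv (\<lambda>t. f (x + t *\<^sub>R axis i 1)) 0"

fun iter_pd :: "'n::finite list \<Rightarrow> 'n sfield \<Rightarrow> 'n sfield" where
  "iter_pd [] f = f"
| "iter_pd (i # is) f = pd i (iter_pd is f)"

definition smooth_on :: "(real^'n::finite) set \<Rightarrow> 'n sfield \<Rightarrow> bool" where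
  "smooth_on U f \<longleftrightarrow> open U \<and>
     (\<forall>is. continuous_on U (iter_pd is f) \<and>
        (\<forall>i. \<forall>x\<in>U. (\<lambda>t. iter_pd is f (x + t *\<^sub>R axis i 1)) differentiable (at 0)))"

definition hyp_space :: "'n::finite \<Rightarrow> (real^'n) set" where
  "hyp_space c = {x. x $ c > 0}"

definition hb :: "'n::finite \<Rightarrow> 'n tensor2" where
  "hb c i j x = (if i = j then 1 / (x $ c)^2 else 0)"

definition hbinv :: "'n::finite \<Rightarrow> 'n tensor2" where
  "hbinv c i j x = (if i = j then (x $ c)^2 else 0)"

definition christoffel :: "'n::finite tensor2 \<Rightarrow> 'n tensor2 \<Rightarrow> 'n \<Rightarrow> 'n \<Rightarrow> 'n \<Rightarrow> 'n sfield" where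
  "christoffel g gi k i j x = (1/2) * (\<Sum>l\<in>UNIV. gi k l x *
      (pd i (g j l) x + pd j (g i l) x - pd l (g i j) x))"

definition ricci :: "'n::finite tensor2 \<Rightarrow> 'n tensor2 \<Rightarrow> 'n tensor2" where
  "ricci g gi i j x = (\<Sum>k\<in>UNIV.
      pd k (christoffel g gi k i j) x - pd j (christoffel g gi k i k) x
      + (\<Sum>l\<in>UNIV. christoffel g gi k k l x * christoffel g gi l i j x
                  - christoffel g gi k j l x * christoffel g gi l i k x))"

definition cov1 :: "'n::finite tensor2 \<Rightarrow> 'n tensor2 \<Rightarrow> 'n tensor2 \<Rightarrow> 'n \<Rightarrow> 'n \<Rightarrow> 'n \<Rightarrow> 'n sfield" where
  "cov1 g gi h k i j x = pd k (h i j) x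
     - (\<Sum>l\<in>UNIV. christoffel g gi l k i x * h l j x)
     - (\<Sum>l\<in>UNIV. christoffel g gi l k j x * h i l x)"

definition cov2 :: "'n::finite tensor2 \<Rightarrow> 'n tensor2 \<Rightarrow> 'n tensor2 \<Rightarrow> 'n \<Rightarrow> 'n \<Rightarrow> 'n \<Rightarrow> 'n \<Rightarrow> 'n sfield" where
  "cov2 g gi h m k i j x = pd m (cov1 g gi h k i j) x
     - (\<Sum>l\<in>UNIV. christoffel g gi l m k x * cov1 g gi h l i j x
                 + christoffel g gi l m i x * cov1 g gi h k l j x
                 + christoffel g gi l m j x * cov1 g gi h k i l x)"

definition trace2 :: "'n::finite tensor2 \<Rightarrow> 'n tensor2 \<Rightarrow> 'n sfield" where
  "trace2 gi h x = (\<Sum>i\<in>UNIV. \<Sum>j\<in>UNIV. gi i j x * h i j x)"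

definition raise2 :: "'n::finite tensor2 \<Rightarrow> 'n tensor2 \<Rightarrow> 'n tensor2" where
  "raise2 gi h i j x = (\<Sum>k\<in>UNIV. \<Sum>l\<in>UNIV. gi i k x * gi j l x * h k l x)"

definition laplace :: "'n::finite tensor2 \<Rightarrow> 'n tensor2 \<Rightarrow> 'n sfield \<Rightarrow> 'n sfield" where
  "laplace g gi f x = (\<Sum>l\<in>UNIV. \<Sum>k\<in>UNIV. gi l k x *
      (pd l (pd k f) x - (\<Sum>m\<in>UNIV. christoffel g gi m l k x * pd m f x)))"

definition opP :: "'n::finite tensor2 \<Rightarrow> 'n tensor2 \<Rightarrow> 'n tensor2 \<Rightarrow> 'n sfield" where
  "opP g gi h x =
     (\<Sum>i\<in>UNIV. \<Sum>j\<in>UNIV. \<Sum>a\<in>UNIV. \<Sum>d\<in>UNIV. gi i a x * gi j d x * cov2 g gi h a d i j x)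
     - laplace g gi (trace2 gi h) x
     - (\<Sum>i\<in>UNIV. \<Sum>j\<in>UNIV. raise2 gi (ricci g gi) i j x * h i j x)"

end

theory Submission
  imports Defs
begin

(* In half-space coordinates b = (x^1)^(-2) delta is conformally flat, so everything is explicit:
   Gamma^k_ij = (delta_ij delta_k1 - delta_ki delta_j1 - delta_kj delta_i1) / x^1, Ric = -(n-1) b,
   and the scalar Laplacian is (x^1)^2 sum_l d_l d_l - (n-2) x^1 d_1.  Expanding P(h) with these
   gives a second-order expression in the coordinate derivatives of h with powers of x^1 as
   coefficients.  On the other side psi^ij = (x^1)^(3-n) (h_ij - delta_ij sum_k h_kk), and the
   product rule turns (x^1)^(n+1) (d_i d_j psi^ij + d_1 (psi^ii / x^1)) into the same expression,
   once symmetry of h identifies sum_i d_i h_i1 with sum_j d_j h_1j.  The formula for h in terms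
   of psi is algebraic: the b-trace of psi is (1-n) (x^1)^(1-n) sum_k h_kk. *)

abbreviation kronecker :: "'a \<Rightarrow> 'a \<Rightarrow> real" ("\<delta>") where
  "\<delta> a b \<equiv> if a = b then 1 else 0"

lemma kronecker_eqs:
  fixes a b :: real
  shows "(if P then a else 0) * b = (if P then a * b else 0)"
    and "b * (if P then a else 0) = (if P then b * a else 0)"
    and "(if P then a else 0) / b = (if P then a / b else 0)"
    and "(\<Sum>l\<in>S. if P then g l else 0) = (if P then sum g S else 0)"
    and "(if P \<and> Q then a else b) = (if P then if Q then a else b else b)"
  by auto

(* Normal form for index contractions: Kronecker factors are pulled out of products and sums
   until sum.delta can evaluate them. *)
lemmas delta_simps = kronecker_eqs sum.delta sum.delta' sum.distrib sum_subtractf sum_negf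
  sum_divide_distrib[symmetric] sum_distrib_left[symmetric] sum_distrib_right[symmetric]
  distrib_left distrib_right left_diff_distrib right_diff_distrib

definition partial_differentiable :: "'n::finite \<Rightarrow> 'n sfield \<Rightarrow> real^'n \<Rightarrow> bool" where
  "partial_differentiable i f x \<longleftrightarrow> (\<lambda>t. f (x + t *\<^sub>R axis i 1)) differentiable (at 0)"

lemma has_real_derivative_pd:
  "partial_differentiable i f x \<Longrightarrow>
     ((\<lambda>t. f (x + t *\<^sub>R axis i 1)) has_real_derivative pd i f x) (at 0)"
  unfolding partial_differentiable_def pd_def by (simp add: DERIV_deriv_iff_real_differentiable)

lemma pd_eqI:
  assumes "((\<lambda>t. f (x + t *\<^sub>R axis i 1)) has_real_derivative D) (at 0)"
  shows "partial_differentiable i f x" and "pd i f x = D"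
  using assms DERIV_imp_deriv real_differentiable_def
  unfolding partial_differentiable_def pd_def by blast+

lemma
  shows partial_differentiable_const [simp]: "partial_differentiable i (\<lambda>y. k) x"
    and pd_const [simp]: "pd i (\<lambda>y. k) x = 0"
  using pd_eqI[of "\<lambda>y. k" x i 0] by simp_all

lemma
  assumes "partial_differentiable i f x" "partial_differentiable i g x"
  shows partial_differentiable_add [simp]: "partial_differentiable i (\<lambda>y. f y + g y) x"
    and pd_add [simp]: "pd i (\<lambda>y. f y + g y) x = pd i f x + pd i g x"
  using pd_eqI[of "\<lambda>y. f y + g y", OF DERIV_add[OF assms[THEN has_real_derivative_pd]]]
  by simp_all

lemma
  assumes "partial_differentiable i f x" "partial_differentiable i g x"
  shows partial_differentiable_diff [simp]: "partial_differentiable i (\<lambda>y. f y - g y) x"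
    and pd_diff [simp]: "pd i (\<lambda>y. f y - g y) x = pd i f x - pd i g x"
  using pd_eqI[of "\<lambda>y. f y - g y", OF DERIV_diff[OF assms[THEN has_real_derivative_pd]]]
  by simp_all

lemma
  assumes "partial_differentiable i f x" "partial_differentiable i g x"
  shows partial_differentiable_mult [simp]: "partial_differentiable i (\<lambda>y. f y * g y) x"
    and pd_mult [simp]: "pd i (\<lambda>y. f y * g y) x = pd i f x * g x + f x * pd i g x"
  using pd_eqI[of "\<lambda>y. f y * g y", OF DERIV_mult[OF assms[THEN has_real_derivative_pd]]]
  by (simp_all add: mult.commute)

lemma
  assumes "partial_differentiable i f x" "partial_differentiable i g x" "g x \<noteq> 0"
  shows partial_differentiable_divide [simp]: "partial_differentiable i (\<lambda>y. f y / g y) x"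
    and pd_divide [simp]:
      "pd i (\<lambda>y. f y / g y) x = (pd i f x * g x - f x * pd i g x) / (g x)\<^sup>2"
  using pd_eqI[of "\<lambda>y. f y / g y", OF DERIV_divide[OF assms(1,2)[THEN has_real_derivative_pd]]]
    assms(3)
  by (simp_all add: power2_eq_square)

lemma
  assumes "partial_differentiable i f x"
  shows partial_differentiable_power [simp]: "partial_differentiable i (\<lambda>y. f y ^ k) x"
    and pd_power [simp]: "pd i (\<lambda>y. f y ^ k) x = of_nat k * f x ^ (k - 1) * pd i f x"
  using pd_eqI[of "\<lambda>y. f y ^ k", OF DERIV_power[OF assms[THEN has_real_derivative_pd]]]
  by (simp_all add: mult.commute)

lemma
  assumes "0 < f x" "partial_differentiable i f x"
  shows partial_differentiable_powr [simp]: "partial_differentiable i (\<lambda>y. f y powr r) x"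
    and pd_powr [simp]: "pd i (\<lambda>y. f y powr r) x = r * f x powr (r - 1) * pd i f x"
  using pd_eqI[of "\<lambda>y. f y powr r", OF DERIV_fun_powr[OF assms(2)[THEN has_real_derivative_pd]]]
    assms(1)
  by simp_all

lemma pd_if [simp]:
    "pd i (\<lambda>y. if P then f y else g y) x = (if P then pd i f x else pd i g x)"
  and partial_differentiable_if [simp]:
    "partial_differentiable i f x \<Longrightarrow> partial_differentiable i g x \<Longrightarrow>
       partial_differentiable i (\<lambda>y. if P then f y else g y) x"
  by (cases P; simp)+

lemma
  fixes F :: "'k \<Rightarrow> 'n::finite sfield"
  assumes "finite S" "\<And>k. k \<in> S \<Longrightarrow> partial_differentiable i (F k) x"
  shows partial_differentiable_sum [simp]: "partial_differentiable i (\<lambda>y. \<Sum>k\<in>S. F k y) x"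
    and pd_sum [simp]: "pd i (\<lambda>y. \<Sum>k\<in>S. F k y) x = (\<Sum>k\<in>S. pd i (F k) x)"
  using pd_eqI[of "\<lambda>y. \<Sum>k\<in>S. F k y",
      OF DERIV_sum[of S, OF assms(2)[THEN has_real_derivative_pd]]]
  by simp_all

lemma
  shows partial_differentiable_coordinate [simp]: "partial_differentiable i (\<lambda>y. y $ c) x"
    and pd_coordinate [simp]: "pd i (\<lambda>y. y $ c) x = \<delta> i c"
proof -
  have "((\<lambda>t. (x + t *\<^sub>R axis i 1) $ c) has_real_derivative \<delta> i c) (at 0)"
    by (auto simp: axis_def intro!: derivative_eq_intros)
  then show "partial_differentiable i (\<lambda>y. y $ c) x" "pd i (\<lambda>y. y $ c) x = \<delta> i c"
    by (simp_all add: pd_eqI)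
qed

lemma pd_cong_open:
  assumes "open U" "x \<in> U" "\<And>y. y \<in> U \<Longrightarrow> f y = g y"
  shows "pd i f x = pd i g x"
proof -
  have "open ((\<lambda>t::real. x + t *\<^sub>R axis i 1) -` U)"
    by (intro open_vimage assms continuous_intros)
  then have "\<forall>\<^sub>F t in nhds 0. x + t *\<^sub>R axis i 1 \<in> U"
    using eventually_nhds_in_open assms(2) by fastforce
  then have "\<forall>\<^sub>F t in nhds 0. f (x + t *\<^sub>R axis i 1) = g (x + t *\<^sub>R axis i 1)"
    by eventually_elim (use assms in auto)
  then show ?thesis unfolding pd_def by (intro deriv_cong_ev) auto
qed

lemma open_hyp_space: "open (hyp_space c)"
  unfolding hyp_space_def by (intro open_Collect_less continuous_intros)

lemma partial_differentiable_iter_pd: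
  "smooth_on U f \<Longrightarrow> x \<in> U \<Longrightarrow> partial_differentiable i (iter_pd is f) x"
  unfolding smooth_on_def partial_differentiable_def by blast

lemma hb_eq: "hb c j l = (\<lambda>y. \<delta> j l / (y $ c)\<^sup>2)"
  by (auto simp: hb_def)

lemma pd_hb: "y $ c \<noteq> 0 \<Longrightarrow> pd a (hb c j l) y = - 2 * \<delta> j l * \<delta> a c / (y $ c) ^ 3"
  unfolding hb_eq by (simp add: power3_eq_cube power2_eq_square)

lemma christoffel_hb:
  fixes c :: "'n::finite"
  shows "christoffel (hb c) (hbinv c) k i j =
           (\<lambda>y. (\<delta> i j * \<delta> k c - \<delta> k i * \<delta> j c - \<delta> k j * \<delta> i c) / y $ c)"
proof
  fix y :: "real^'n"
  show "christoffel (hb c) (hbinv c) k i j y =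
          (\<delta> i j * \<delta> k c - \<delta> k i * \<delta> j c - \<delta> k j * \<delta> i c) / y $ c"
  proof (cases "y $ c = 0")
    case True
    then show ?thesis by (simp add: christoffel_def hbinv_def delta_simps)
  next
    case False
    then show ?thesis
      by (simp add: christoffel_def hbinv_def pd_hb delta_simps cong: if_cong)
        (simp add: field_simps power2_eq_square power3_eq_cube)
  qed
qed

lemma sum_christoffel_hb:
  "(\<Sum>l\<in>UNIV. christoffel (hb c) (hbinv c) l a b y * F l) =
     (\<delta> a b * F c - \<delta> b c * F a - \<delta> a c * F b) / y $ c"
  by (simp add: christoffel_hb delta_simps)

lemma ricci_hb:
  fixes c :: "'n::finite"
  assumes "y $ c \<noteq> 0"
  shows "ricci (hb c) (hbinv c) i j y = - (real CARD('n) - 1) * hb c i j y"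
  using assms unfolding ricci_def christoffel_hb
  by (simp add: hb_def delta_simps cong: if_cong) (simp add: field_simps power2_eq_square)

lemma laplace_hb:
  fixes c :: "'n::finite"
  shows "laplace (hb c) (hbinv c) f x =
           (x $ c)\<^sup>2 * (\<Sum>l\<in>UNIV. pd l (pd l f) x) - (real CARD('n) - 2) * x $ c * pd c f x"
  unfolding laplace_def sum_christoffel_hb
  by (cases "x $ c = 0")
    (simp_all add: hbinv_def delta_simps field_simps power2_eq_square cong: if_cong)

lemma trace2_hbinv: "trace2 (hbinv c) T = (\<lambda>y. (y $ c)\<^sup>2 * (\<Sum>i\<in>UNIV. T i i y))"
  by (auto simp: trace2_def hbinv_def delta_simps cong: if_cong)

lemma raise2_hbinv: "raise2 (hbinv c) T i j y = (y $ c) ^ 4 * T i j y"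
  by (simp add: raise2_def hbinv_def delta_simps power2_eq_square power4_eq_xxxx cong: if_cong)

lemma double_contraction_hbinv:
  "(\<Sum>i\<in>UNIV. \<Sum>j\<in>UNIV. \<Sum>a\<in>UNIV. \<Sum>d\<in>UNIV. hbinv c i a x * hbinv c j d x * T a d i j) =
     (x $ c) ^ 4 * (\<Sum>i\<in>UNIV. \<Sum>j\<in>UNIV. T i j i j)"
  by (simp add: hbinv_def delta_simps power2_eq_square power4_eq_xxxx cong: if_cong)

lemma cov1_hb:
  "cov1 (hb c) (hbinv c) h k i j = (\<lambda>y. pd k (h i j) y +
     (\<delta> i c * h k j y + \<delta> j c * h i k y + 2 * \<delta> k c * h i j y
      - \<delta> k i * h c j y - \<delta> k j * h i c y) / y $ c)"
  by (rule ext, unfold cov1_def sum_christoffel_hb) (simp add: add_divide_distrib diff_divide_distrib)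

lemma ricci_contraction_hb:
  fixes c :: "'n::finite"
  assumes "x $ c \<noteq> 0"
  shows "(\<Sum>i\<in>UNIV. \<Sum>j\<in>UNIV. raise2 (hbinv c) (ricci (hb c) (hbinv c)) i j x * h i j x) =
           - (real CARD('n) - 1) * (x $ c)\<^sup>2 * (\<Sum>j\<in>UNIV. h j j x)"
  using assms unfolding raise2_hbinv ricci_hb[OF assms]
  by (simp add: hb_def delta_simps cong: if_cong)
    (simp add: field_simps power2_eq_square power4_eq_xxxx)

lemma powr_eq_power_divide: "0 < t \<Longrightarrow> t powr (real k - real m) = t ^ k / t ^ m"
  by (simp add: powr_diff powr_realpow)

lemma powr_minus_nat_eq_divide:
  fixes t :: real
  assumes "0 < t"
  shows "t powr (1 - real n) = t\<^sup>2 / t ^ (n + 1)"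
    and "t powr (2 - real n) = t ^ 3 / t ^ (n + 1)"
    and "t powr (3 - real n) = t ^ 4 / t ^ (n + 1)"
  using powr_eq_power_divide[OF assms, of 2 "n + 1"] powr_eq_power_divide[OF assms, of 3 "n + 1"]
    powr_eq_power_divide[OF assms, of 4 "n + 1"]
  by (simp_all add: numeral_eq_Suc)

definition hyp_psi :: "'n::finite \<Rightarrow> 'n tensor2 \<Rightarrow> 'n tensor2" where
  "hyp_psi c h i j x = (h i j x - trace2 (hbinv c) h x * hb c i j x) / (x $ c) ^ (CARD('n) + 1)"

lemma raise2_hyp_psi:
  fixes c :: "'n::finite"
  assumes "y \<in> hyp_space c"
  shows "raise2 (hbinv c) (hyp_psi c h) i j y =
           (y $ c) powr (3 - real CARD('n)) * (h i j y - \<delta> i j * (\<Sum>k\<in>UNIV. h k k y))"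
proof -
  have t: "0 < y $ c"
    using assms by (simp add: hyp_space_def)
  then show ?thesis
    by (simp add: raise2_hbinv hyp_psi_def trace2_hbinv hb_def powr_minus_nat_eq_divide(3)[OF t]
        power2_eq_square)
qed

lemma trace2_hyp_psi:
  fixes c :: "'n::finite"
  shows "trace2 (hbinv c) (hyp_psi c h) x =
           (1 - real CARD('n)) * (x $ c)\<^sup>2 * (\<Sum>k\<in>UNIV. h k k x) / (x $ c) ^ (CARD('n) + 1)"
  by (simp add: trace2_hbinv hyp_psi_def hb_def delta_simps field_simps power2_eq_square cong: if_cong)

lemma hyp_psi_inversion:
  fixes c :: "'n::finite"
  assumes "CARD('n) \<noteq> 1" "x $ c \<noteq> 0"
  shows "h i j x = (x $ c) ^ (CARD('n) + 1) *
           (hyp_psi c h i j x + 1 / (1 - real CARD('n)) * trace2 (hbinv c) (hyp_psi c h) x * hb c i j x)"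
proof -
  have "1 - real CARD('n) \<noteq> 0" using assms(1) by simp
  with assms(2) show ?thesis
    unfolding trace2_hyp_psi unfolding hyp_psi_def trace2_hbinv hb_def
    by (simp add: field_simps power2_eq_square)
qed

lemma sum_raise2_hyp_psi_diag:
  fixes c :: "'n::finite"
  assumes "y \<in> hyp_space c"
  shows "(\<Sum>i\<in>UNIV. raise2 (hbinv c) (hyp_psi c h) i i y) =
           (1 - real CARD('n)) * (y $ c) powr (3 - real CARD('n)) * (\<Sum>k\<in>UNIV. h k k y)"
  using assms by (simp add: raise2_hyp_psi delta_simps algebra_simps)

locale hyp_twice_differentiable =
  fixes c :: "'n::finite" and h :: "'n tensor2"
  assumes partial_differentiable_h [simp]:
      "\<And>i j m y. y \<in> hyp_space c \<Longrightarrow> partial_differentiable m (h i j) y"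
    and partial_differentiable_pd_h [simp]:
      "\<And>i j k m y. y \<in> hyp_space c \<Longrightarrow> partial_differentiable m (pd k (h i j)) y"
begin

lemma double_divergence_cov2_hb:
  assumes x: "x \<in> hyp_space c" and sym: "\<And>i j. h i j = h j i"
  shows "(\<Sum>i\<in>UNIV. \<Sum>j\<in>UNIV. \<Sum>a\<in>UNIV. \<Sum>d\<in>UNIV.
            hbinv c i a x * hbinv c j d x * cov2 (hb c) (hbinv c) h a d i j x) =
         (x $ c) ^ 4 * (\<Sum>i\<in>UNIV. \<Sum>j\<in>UNIV. pd i (pd j (h i j)) x)
         + (x $ c) ^ 3 * ((6 - 2 * real CARD('n)) * (\<Sum>i\<in>UNIV. pd i (h i c) x)
                         + (\<Sum>j\<in>UNIV. pd c (h j j) x))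
         + (3 - real CARD('n)) * (x $ c)\<^sup>2 *
             ((\<Sum>j\<in>UNIV. h j j x) + (2 - real CARD('n)) * h c c x)"
proof -
  have t: "x $ c > 0"
    using x by (simp add: hyp_space_def)
  have div_sym: "(\<Sum>i\<in>UNIV. pd i (h c i) x) = (\<Sum>i\<in>UNIV. pd i (h i c) x)"
    by (metis sym)
  show ?thesis
    unfolding double_contraction_hbinv cov2_def sum.distrib sum_christoffel_hb cov1_hb
    using x t
    by (simp add: delta_simps div_sym cong: if_cong)
      (simp add: div_sym field_simps power2_eq_square power3_eq_cube power4_eq_xxxx)
qed

lemma pd_trace2_hbinv:
  assumes "y \<in> hyp_space c"
  shows "pd k (trace2 (hbinv c) h) y =
           2 * \<delta> k c * y $ c * (\<Sum>j\<in>UNIV. h j j y)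
           + (y $ c)\<^sup>2 * (\<Sum>j\<in>UNIV. pd k (h j j) y)"
  using assms by (simp add: trace2_hbinv)

lemma laplace_trace2_hbinv:
  assumes x: "x \<in> hyp_space c"
  shows "laplace (hb c) (hbinv c) (trace2 (hbinv c) h) x =
           (x $ c) ^ 4 * (\<Sum>l\<in>UNIV. \<Sum>j\<in>UNIV. pd l (pd l (h j j)) x)
           + (6 - real CARD('n)) * (x $ c) ^ 3 * (\<Sum>j\<in>UNIV. pd c (h j j) x)
           + (6 - 2 * real CARD('n)) * (x $ c)\<^sup>2 * (\<Sum>j\<in>UNIV. h j j x)"
proof -
  have "pd l (pd l (trace2 (hbinv c) h)) x =
          pd l (\<lambda>y. 2 * \<delta> l c * y $ c * (\<Sum>j\<in>UNIV. h j j y)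
                   + (y $ c)\<^sup>2 * (\<Sum>j\<in>UNIV. pd l (h j j) y)) x" for l
    by (rule pd_cong_open[OF open_hyp_space x]) (simp add: pd_trace2_hbinv)
  with x show ?thesis
    unfolding laplace_hb
    by (simp add: pd_trace2_hbinv delta_simps cong: if_cong)
      (simp add: field_simps power2_eq_square power3_eq_cube power4_eq_xxxx)
qed

lemma pd_raise2_hyp_psi:
  assumes y: "y \<in> hyp_space c"
  shows "pd j (raise2 (hbinv c) (hyp_psi c h) i j) y =
           (3 - real CARD('n)) * (y $ c) powr (2 - real CARD('n)) * \<delta> j c *
             (h i j y - \<delta> i j * (\<Sum>k\<in>UNIV. h k k y))
           + (y $ c) powr (3 - real CARD('n)) *
             (pd j (h i j) y - \<delta> i j * (\<Sum>k\<in>UNIV. pd j (h k k) y))"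
proof -
  have t: "0 < y $ c"
    using y by (simp add: hyp_space_def)
  have "pd j (raise2 (hbinv c) (hyp_psi c h) i j) y =
          pd j (\<lambda>z. (z $ c) powr (3 - real CARD('n)) *
                     (h i j z - \<delta> i j * (\<Sum>k\<in>UNIV. h k k z))) y"
    by (rule pd_cong_open[OF open_hyp_space y]) (rule raise2_hyp_psi)
  with y t show ?thesis by simp
qed

lemma double_divergence_raise2_hyp_psi:
  assumes x: "x \<in> hyp_space c" and sym: "\<And>i j. h i j = h j i"
  shows "(x $ c) ^ (CARD('n) + 1) *
           (\<Sum>i\<in>UNIV. \<Sum>j\<in>UNIV. pd i (pd j (raise2 (hbinv c) (hyp_psi c h) i j)) x) =
         (x $ c) ^ 4 * ((\<Sum>i\<in>UNIV. \<Sum>j\<in>UNIV. pd i (pd j (h i j)) x)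
                        - (\<Sum>l\<in>UNIV. \<Sum>j\<in>UNIV. pd l (pd l (h j j)) x))
         + 2 * (3 - real CARD('n)) * (x $ c) ^ 3 *
             ((\<Sum>i\<in>UNIV. pd i (h i c) x) - (\<Sum>j\<in>UNIV. pd c (h j j) x))
         + (3 - real CARD('n)) * (2 - real CARD('n)) * (x $ c)\<^sup>2 *
             (h c c x - (\<Sum>j\<in>UNIV. h j j x))"
proof -
  have t: "0 < x $ c"
    using x by (simp add: hyp_space_def)
  have div_sym: "(\<Sum>j\<in>UNIV. pd j (h c j) x) = (\<Sum>i\<in>UNIV. pd i (h i c) x)"
    by (metis sym)
  have "pd i (pd j (raise2 (hbinv c) (hyp_psi c h) i j)) x =
          pd i (\<lambda>y. (3 - real CARD('n)) * (y $ c) powr (2 - real CARD('n)) * \<delta> j c *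
                       (h i j y - \<delta> i j * (\<Sum>k\<in>UNIV. h k k y))
                     + (y $ c) powr (3 - real CARD('n)) *
                       (pd j (h i j) y - \<delta> i j * (\<Sum>k\<in>UNIV. pd j (h k k) y))) x" for i j
    by (rule pd_cong_open[OF open_hyp_space x]) (rule pd_raise2_hyp_psi)
  with x t show ?thesis
    by (simp add: delta_simps div_sym cong: if_cong)
      (simp add: powr_minus_nat_eq_divide[OF t] field_simps
         power2_eq_square power3_eq_cube power4_eq_xxxx)
qed

lemma pd_trace_raise2_hyp_psi:
  assumes x: "x \<in> hyp_space c"
  shows "(x $ c) ^ (CARD('n) + 1) *
           pd c (\<lambda>y. 1 / y $ c * (\<Sum>i\<in>UNIV. raise2 (hbinv c) (hyp_psi c h) i i y)) x =
         (1 - real CARD('n)) * ((x $ c) ^ 3 * (\<Sum>j\<in>UNIV. pd c (h j j) x)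
                                + (2 - real CARD('n)) * (x $ c)\<^sup>2 * (\<Sum>j\<in>UNIV. h j j x))"
proof -
  have t: "0 < x $ c"
    using x by (simp add: hyp_space_def)
  have eq: "pd c (\<lambda>y. 1 / y $ c * (\<Sum>i\<in>UNIV. raise2 (hbinv c) (hyp_psi c h) i i y)) x =
      pd c (\<lambda>y. (1 - real CARD('n)) * (y $ c) powr (3 - real CARD('n)) * (\<Sum>k\<in>UNIV. h k k y) / y $ c) x"
    by (rule pd_cong_open[OF open_hyp_space x]) (simp add: sum_raise2_hyp_psi_diag)
  show ?thesis
    unfolding eq using x t
    by (simp add: powr_minus_nat_eq_divide[OF t] field_simps
        power2_eq_square power3_eq_cube power4_eq_xxxx)
qed

lemma opP_hb:
  assumes x: "x \<in> hyp_space c" and sym: "\<And>i j. h i j = h j i"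
  shows "opP (hb c) (hbinv c) h x =
           (x $ c) ^ 4 * ((\<Sum>i\<in>UNIV. \<Sum>j\<in>UNIV. pd i (pd j (h i j)) x)
                          - (\<Sum>l\<in>UNIV. \<Sum>j\<in>UNIV. pd l (pd l (h j j)) x))
           + (x $ c) ^ 3 * ((6 - 2 * real CARD('n)) * (\<Sum>i\<in>UNIV. pd i (h i c) x)
                           + (real CARD('n) - 5) * (\<Sum>j\<in>UNIV. pd c (h j j) x))
           + (x $ c)\<^sup>2 * ((3 - real CARD('n)) * (2 - real CARD('n)) * h c c x
                           + (2 * real CARD('n) - 4) * (\<Sum>j\<in>UNIV. h j j x))"
proof -
  have "x $ c \<noteq> 0"
    using x by (simp add: hyp_space_def)
  then show ?thesis
    unfolding opP_def double_divergence_cov2_hb[OF x sym] laplace_trace2_hbinv[OF x]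
      ricci_contraction_hb[OF \<open>x $ c \<noteq> 0\<close>]
    by (simp add: algebra_simps)
qed

lemma opP_hb_divergence_form:
  assumes x: "x \<in> hyp_space c" and sym: "\<And>i j. h i j = h j i"
  shows "opP (hb c) (hbinv c) h x = (x $ c) ^ (CARD('n) + 1) *
           ((\<Sum>i\<in>UNIV. \<Sum>j\<in>UNIV. pd i (pd j (raise2 (hbinv c) (hyp_psi c h) i j)) x)
            + pd c (\<lambda>y. 1 / y $ c * (\<Sum>i\<in>UNIV. raise2 (hbinv c) (hyp_psi c h) i i y)) x)"
  unfolding distrib_left double_divergence_raise2_hyp_psi[OF x sym] pd_trace_raise2_hyp_psi[OF x]
    opP_hb[OF x sym]
  by (simp add: algebra_simps)

end

lemma smooth_on_hyp_twice_differentiable: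
  fixes c :: "'n::finite"
  assumes "\<And>i j. smooth_on (hyp_space c) (h i j)"
  shows "hyp_twice_differentiable c h"
proof
  fix i j k m and y :: "real^'n"
  assume "y \<in> hyp_space c"
  from partial_differentiable_iter_pd[OF assms this, of m "[]"]
    partial_differentiable_iter_pd[OF assms this, of m "[k]"]
  show "partial_differentiable m (h i j) y" "partial_differentiable m (pd k (h i j)) y"
    by simp_all
qed

theorem lemma2p2:
  fixes c :: "'n::finite" and h :: "'n tensor2" and psi :: "'n tensor2"
  assumes n2: "CARD('n) \<ge> 2"
    and hsym: "\<And>i j. h i j = h j i"
    and hsmooth: "\<And>i j. smooth_on (hyp_space c) (h i j)"
    and psi_def: "\<And>i j x. psi i j x =
        (h i j x - trace2 (hbinv c) h x * hb c i j x) / (x $ c) ^ (CARD('n) + 1)"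
  shows "\<forall>x\<in>hyp_space c.
           (\<forall>i j. h i j x = (x $ c) ^ (CARD('n) + 1) *
              (psi i j x + 1 / (1 - real CARD('n)) * trace2 (hbinv c) psi x * hb c i j x))
         \<and> opP (hb c) (hbinv c) h x = (x $ c) ^ (CARD('n) + 1) *
              ((\<Sum>i\<in>UNIV. \<Sum>j\<in>UNIV. pd i (pd j (raise2 (hbinv c) psi i j)) x)
               + pd c (\<lambda>y. 1 / (y $ c) * (\<Sum>i\<in>UNIV. raise2 (hbinv c) psi i i y)) x)"
proof -
  interpret hyp_twice_differentiable c h
    using hsmooth by (rule smooth_on_hyp_twice_differentiable)
  have "CARD('n) \<noteq> 1"
    using n2 by simp
  moreover have "psi = hyp_psi c h"
    by (intro ext) (simp add: psi_def hyp_psi_def)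
  ultimately show ?thesis
    using hyp_psi_inversion[where c = c] opP_hb_divergence_form[OF _ hsym] by (simp add: hyp_space_def)
qed

end
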